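(* Let $k$ be a field, $R=k[x_1,\dots,x_d]$, $T=k[T_1,\dots,T_n]$, $S=k[x_1,\dots,x_d,T_1,\dots,T_n]$. Let $\varphi$ be an $n\times n$ alternating matrix with linear entries in $R$, $B$ the $d\times n$ matrix with linear entries in $T$ such that $[T_1,\dots,T_n]\cdot\varphi=[x_1,\dots,x_d]\cdot B$, $\mathfrak B=\begin{bmatrix}\varphi&-B^{\mathrm t}\\ B&0\end{bmatrix}$, $F_i$ equal to $(-1)^{n+d-i}$ times the Pfaffian of $\mathfrak B$ with row and column $i$ removed, and $C(\varphi)=c_T(F_{n+d})$. Then: (a) $c_T(F_i)=T_i\cdot c_T(F_{n+j})=T_i\cdot C(\varphi)$ for every $1\le i\le n$ and $1\le j\le d$; (b) $c_T(F_{n+j})=C(\varphi)$ for every $1\le j\le d$; (c) $C(\varphi)\subset I_d(B):_T(T_1,\dots,T_n)$.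
   Context: For $F\in S=T[x_1,\dots,x_d]$, the content ideal $c_T(F)$ is the ideal of $T$ generated by the coefficients of $F$ regarded as a polynomial in $x_1,\dots,x_d$ with coefficients in $T$. $I_d(B)$ is the ideal of $T$ generated by the $d\times d$ minors of $B$. *)

theory Defs
  imports "HOL-Library.Poly_Mapping" "HOL-Combinatorics.Permutations"
begin

(* T = k[T_1..T_n]: polynomials over 'k in variables indexed by nat (T_i = variable i) *)
type_synonym 'k tpoly = "(nat \<Rightarrow>\<^sub>0 nat) \<Rightarrow>\<^sub>0 'k"
(* S = T[x_1..x_d]: polynomials in the x-variables (x_j = variable j) with coefficients in T *)
type_synonym 'k spoly = "(nat \<Rightarrow>\<^sub>0 nat) \<Rightarrow>\<^sub>0 'k tpoly"

definition constT :: "'k::comm_ring_1 \<Rightarrow> 'k tpoly" where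
  "constT c = Poly_Mapping.single 0 c"

definition Tv :: "nat \<Rightarrow> 'k::comm_ring_1 tpoly" where
  "Tv i = Poly_Mapping.single (Poly_Mapping.single i 1) 1"

definition toS :: "'k::comm_ring_1 tpoly \<Rightarrow> 'k spoly" where
  "toS t = Poly_Mapping.single 0 t"

definition Xv :: "nat \<Rightarrow> 'k::comm_ring_1 spoly" where
  "Xv j = Poly_Mapping.single (Poly_Mapping.single j 1) 1"

definition linR :: "nat \<Rightarrow> (nat \<Rightarrow> 'k::comm_ring_1) \<Rightarrow> 'k spoly" where
  "linR d c = (\<Sum>j\<in>{1..d}. toS (constT (c j)) * Xv j)"

definition linT :: "nat \<Rightarrow> (nat \<Rightarrow> 'k::comm_ring_1) \<Rightarrow> 'k tpoly" where
  "linT n b = (\<Sum>i\<in>{1..n}. constT (b i) * Tv i)"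

function pfaff :: "(nat \<Rightarrow> nat \<Rightarrow> 'a::comm_ring_1) \<Rightarrow> nat list \<Rightarrow> 'a" where
  "pfaff A [] = 1"
| "pfaff A (i # rest) =
     sum_list (map (\<lambda>k. (-1) ^ k * A i (rest ! k) * pfaff A (take k rest @ drop (Suc k) rest))
                   [0..<length rest])"
  by pat_completeness auto
termination
  by (relation "measure (\<lambda>(A, xs). length xs)") auto

definition Bfrak :: "nat \<Rightarrow> (nat \<Rightarrow> nat \<Rightarrow> 'k::comm_ring_1 spoly) \<Rightarrow> (nat \<Rightarrow> nat \<Rightarrow> 'k tpoly)
     \<Rightarrow> nat \<Rightarrow> nat \<Rightarrow> 'k spoly" where
  "Bfrak n phi B a b =
     (if a \<le> n \<and> b \<le> n then phi a b
      else if a \<le> n then - toS (B (b - n) a)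
      else if b \<le> n then toS (B (a - n) b)
      else 0)"

definition Fpf :: "nat \<Rightarrow> nat \<Rightarrow> (nat \<Rightarrow> nat \<Rightarrow> 'k::comm_ring_1 spoly) \<Rightarrow> (nat \<Rightarrow> nat \<Rightarrow> 'k tpoly)
     \<Rightarrow> nat \<Rightarrow> 'k spoly" where
  "Fpf n d phi B i = (-1) ^ (n + d - i) * pfaff (Bfrak n phi B) (removeAll i [1..<n + d + 1])"

definition ideal_gen :: "'a::comm_ring_1 set \<Rightarrow> 'a set" where
  "ideal_gen G = {\<Sum>g\<in>A. r g * g | A r. finite A \<and> A \<subseteq> G}"

definition cT :: "'k::comm_ring_1 spoly \<Rightarrow> 'k tpoly set" where
  "cT F = ideal_gen (range (Poly_Mapping.lookup F))"

definition detm :: "nat \<Rightarrow> (nat \<Rightarrow> nat \<Rightarrow> 'a::comm_ring_1) \<Rightarrow> 'a" where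
  "detm m M = (\<Sum>p | p permutes {1..m}. of_int (sign p) * (\<Prod>i\<in>{1..m}. M i (p i)))"

definition minors_ideal :: "nat \<Rightarrow> nat \<Rightarrow> (nat \<Rightarrow> nat \<Rightarrow> 'a::comm_ring_1) \<Rightarrow> 'a set" where
  "minors_ideal d n B = ideal_gen {detm d (\<lambda>i j. B i (cols j)) | cols.
       strict_mono_on {1..d} cols \<and> cols ` {1..d} \<subseteq> {1..n}}"

definition colonT :: "'k::comm_ring_1 tpoly set \<Rightarrow> nat \<Rightarrow> 'k tpoly set" where
  "colonT I n = {t. \<forall>i\<in>{1..n}. t * Tv i \<in> I}"

end

theory Submission
  imports Defs "Jordan_Normal_Form.Determinant"
begin

text \<open>The vector \<open>v = (T\<^sub>1, \<dots>, T\<^sub>n, -x\<^sub>1, \<dots>, -x\<^sub>d)\<close> lies in the left kernel of \<open>\<BB>\<close>: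
  on the first \<open>n\<close> columns this is \<open>[T] \<phi> = [x] B\<close>, and on the last \<open>d\<close> columns it says
  \<open>B [T]\<^sup>t = 0\<close>, which follows from \<open>[x] B [T]\<^sup>t = [T] \<phi> [T]\<^sup>t = 0\<close>.  For an alternating matrix
  with a left kernel vector \<open>v\<close>, the signed submaximal Pfaffians \<open>F\<^sub>i\<close> satisfy \<open>v\<^sub>a F\<^sub>c = v\<^sub>c F\<^sub>a\<close>.
  Hence \<open>x\<^sub>j F\<^sub>i = -T\<^sub>i F\<^sub>n\<^sub>+\<^sub>j\<close> and \<open>x\<^sub>j F\<^sub>n\<^sub>+\<^sub>d = x\<^sub>d F\<^sub>n\<^sub>+\<^sub>j\<close>, and since multiplying by a variable
  \<open>x\<^sub>j\<close> does not change the content ideal, (a) and (b) follow.  For (c), the last \<open>d\<close> rows of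
  \<open>\<BB>\<close> have a zero diagonal block, so expanding the Pfaffian defining \<open>F\<^sub>i\<close> (\<open>i \<le> n\<close>) along
  them writes \<open>F\<^sub>i\<close> as a combination of the \<open>d \<times> d\<close> minors of \<open>B\<close>; thus
  \<open>T\<^sub>i C(\<phi>) = c\<^sub>T(F\<^sub>i) \<subseteq> I\<^sub>d(B)\<close>.\<close>

definition remove_nth :: "nat \<Rightarrow> 'a list \<Rightarrow> 'a list" where
  "remove_nth k xs = take k xs @ drop (Suc k) xs"

lemma length_remove_nth [simp]: "k < length xs \<Longrightarrow> length (remove_nth k xs) = length xs - 1"
  by (simp add: remove_nth_def)

lemma nth_remove_nth:
  "k < length xs \<Longrightarrow> i < length xs - 1 \<Longrightarrow> remove_nth k xs ! i = xs ! insert_index k i"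
  by (auto simp: remove_nth_def insert_index_def nth_append min_def)

lemma remove_nth_Cons_0 [simp]: "remove_nth 0 (x # xs) = xs"
  by (simp add: remove_nth_def)

lemma remove_nth_Cons_Suc [simp]: "remove_nth (Suc k) (x # xs) = x # remove_nth k xs"
  by (simp add: remove_nth_def)

lemma remove_nth_append_left: "k < length xs \<Longrightarrow> remove_nth k (xs @ ys) = remove_nth k xs @ ys"
  by (simp add: remove_nth_def)

lemma remove_nth_append_right: "remove_nth (length xs + k) (xs @ ys) = xs @ remove_nth k ys"
  by (simp add: remove_nth_def)

lemma remove_nth_remove_nth:
  assumes "m < w" "w < length xs"
  shows "remove_nth (w - 1) (remove_nth m xs) = remove_nth m (remove_nth w xs)"
proof (rule nth_equalityI)
  fix i assume "i < length (remove_nth (w - 1) (remove_nth m xs))"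
  then have i: "i < length xs - 2" using assms by simp
  have "remove_nth (w - 1) (remove_nth m xs) ! i = xs ! insert_index m (insert_index (w - 1) i)"
    using assms i by (simp add: nth_remove_nth insert_index_def)
  also have "\<dots> = xs ! insert_index w (insert_index m i)"
    using assms by (intro arg_cong[where f = "(!) xs"]) (auto simp: insert_index_def)
  also have "\<dots> = remove_nth m (remove_nth w xs) ! i"
    using assms i by (simp add: nth_remove_nth insert_index_def)
  finally show "remove_nth (w - 1) (remove_nth m xs) ! i = remove_nth m (remove_nth w xs) ! i" .
qed (use assms in simp)

text \<open>\<open>delete_index m w\<close> is the position of entry \<open>w\<close> once entry \<open>m\<close> has been removed.\<close>
lemma remove_nth_remove_nth_commute:
  assumes "m < length xs" "w < length xs" "m \<noteq> w"
  shows "remove_nth (delete_index m w) (remove_nth m xs) = remove_nth (delete_index w m) (remove_nth w xs)"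
  using assms remove_nth_remove_nth[of m w xs] remove_nth_remove_nth[of w m xs]
  by (cases "m < w") (auto simp: delete_index_def)

lemma sign_delete_index:
  "m \<noteq> w \<Longrightarrow> (-1::'a::comm_ring_1) ^ m * (-1) ^ delete_index m w = - ((-1) ^ w * (-1) ^ delete_index w m)"
  by (cases m; cases w) (auto simp: delete_index_def)

lemma sum_lessThan_delete_index:
  assumes "m < L"
  shows "(\<Sum>p<L - 1. g p) = (\<Sum>w\<in>{..<L} - {m}. g (delete_index m w))"
proof (rule sum.reindex_bij_witness[where i = "delete_index m" and j = "insert_index m"])
qed (use assms in \<open>auto simp: delete_index_def insert_index_def\<close>)

lemma sum_sum_antisymmetric_eq_0:
  fixes h :: "'b \<Rightarrow> 'b \<Rightarrow> 'a::comm_ring_1"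
  assumes "finite I" "\<And>m w. m \<in> I \<Longrightarrow> w \<in> I \<Longrightarrow> h w m = - h m w" "\<And>m. m \<in> I \<Longrightarrow> h m m = 0"
  shows "(\<Sum>m\<in>I. \<Sum>w\<in>I. h m w) = 0"
  using assms
proof (induction I rule: finite_induct)
  case (insert x F)
  have "(\<Sum>m\<in>F. h m x) + (\<Sum>w\<in>F. h x w) = (\<Sum>w\<in>F. h w x + h x w)"
    by (simp add: sum.distrib)
  also have "\<dots> = 0"
    using insert.prems(1)[of x] by (intro sum.neutral) simp
  finally have "(\<Sum>m\<in>F. h m x) + (\<Sum>w\<in>F. h x w) = 0" .
  moreover have "(\<Sum>m\<in>F. \<Sum>w\<in>F. h m w) = 0"
    by (rule insert.IH; rule insert.prems; simp)
  moreover have "(\<Sum>m\<in>insert x F. \<Sum>w\<in>insert x F. h m w)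
      = h x x + ((\<Sum>m\<in>F. h m x) + (\<Sum>w\<in>F. h x w)) + (\<Sum>m\<in>F. \<Sum>w\<in>F. h m w)"
    using insert.hyps by (simp add: sum.distrib add_ac)
  ultimately show ?case
    using insert.prems(2)[of x] by simp
qed simp

lemma set_remove_nth_subset: "set (remove_nth k xs) \<subseteq> set xs"
  by (auto simp: remove_nth_def dest: in_set_takeD in_set_dropD)

section \<open>Pfaffians of alternating matrices\<close>

lemma pfaff_Cons:
  "pfaff A (i # rest) = (\<Sum>k<length rest. (-1) ^ k * A i (rest ! k) * pfaff A (remove_nth k rest))"
  by (simp add: remove_nth_def interv_sum_list_conv_sum_set_nat atLeast0LessThan)

declare pfaff.simps(2) [simp del]

lemma pfaff_cong:
  "(\<And>i j. i \<in> set l \<Longrightarrow> j \<in> set l \<Longrightarrow> A i j = A' i j) \<Longrightarrow> pfaff A l = pfaff A' l"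
proof (induction l rule: length_induct)
  case (1 l)
  show ?case
  proof (cases l)
    case (Cons i rest)
    have "pfaff A (remove_nth k rest) = pfaff A' (remove_nth k rest)" if "k < length rest" for k
      using that "1.prems" Cons set_remove_nth_subset[of k rest]
      by (intro "1.IH"[rule_format]) (auto simp: subset_iff)
    then show ?thesis
      using 1 Cons by (simp add: pfaff_Cons)
  qed simp
qed

definition alternating :: "(nat \<Rightarrow> nat \<Rightarrow> 'a::comm_ring_1) \<Rightarrow> bool" where
  "alternating A \<longleftrightarrow> (\<forall>i j. A i j = - A j i) \<and> (\<forall>i. A i i = 0)"

text \<open>The part of the expansion of \<open>pfaff A (i # j # r)\<close> along its first two rows in which
  both rows are matched with entries of \<open>r\<close>, for rows \<open>a = A i\<close> and \<open>b = A j\<close>.\<close>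
definition pfaff_two_rows :: "(nat \<Rightarrow> nat \<Rightarrow> 'a::comm_ring_1) \<Rightarrow> (nat \<Rightarrow> 'a) \<Rightarrow> (nat \<Rightarrow> 'a) \<Rightarrow> nat list \<Rightarrow> 'a" where
  "pfaff_two_rows A a b r = (\<Sum>m<length r. \<Sum>p<length r - 1.
     (-1) ^ m * (-1) ^ p * a (r ! m) * b (remove_nth m r ! p) * pfaff A (remove_nth p (remove_nth m r)))"

lemma pfaff_Cons_Cons: "pfaff A (i # j # r) = A i j * pfaff A r - pfaff_two_rows A (A i) (A j) r"
proof -
  have "pfaff A (i # j # r) = A i j * pfaff A r
      + (\<Sum>m<length r. (-1) ^ Suc m * A i (r ! m) * pfaff A (j # remove_nth m r))"
    by (simp add: pfaff_Cons sum.lessThan_Suc_shift del: sum.lessThan_Suc)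
  also have "(\<Sum>m<length r. (-1) ^ Suc m * A i (r ! m) * pfaff A (j # remove_nth m r))
      = - pfaff_two_rows A (A i) (A j) r"
    by (simp add: pfaff_two_rows_def pfaff_Cons sum_distrib_left sum_negf[symmetric] algebra_simps)
  finally show ?thesis by simp
qed

lemma pfaff_two_rows_pairs:
  "pfaff_two_rows A a b r = (\<Sum>m<length r. \<Sum>w<length r. if m = w then 0 else
     (-1) ^ m * (-1) ^ delete_index m w * (a (r ! m) * b (r ! w))
       * pfaff A (remove_nth (delete_index m w) (remove_nth m r)))"
  unfolding pfaff_two_rows_def
proof (rule sum.cong[OF refl])
  fix m assume "m \<in> {..<length r}"
  then have m: "m < length r" by simp
  let ?t = "\<lambda>w. (-1) ^ m * (-1) ^ delete_index m w * (a (r ! m) * b (r ! w))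
        * pfaff A (remove_nth (delete_index m w) (remove_nth m r))"
  have "(\<Sum>p<length r - 1. (-1) ^ m * (-1) ^ p * a (r ! m) * b (remove_nth m r ! p)
        * pfaff A (remove_nth p (remove_nth m r)))
      = (\<Sum>w\<in>{..<length r} - {m}. (-1) ^ m * (-1) ^ delete_index m w * a (r ! m)
        * b (remove_nth m r ! delete_index m w) * pfaff A (remove_nth (delete_index m w) (remove_nth m r)))"
    using m by (rule sum_lessThan_delete_index)
  also have "\<dots> = (\<Sum>w\<in>{..<length r} - {m}. ?t w)"
    using m by (intro sum.cong refl) (auto simp: nth_remove_nth insert_delete_index delete_index_def mult.assoc)
  also have "\<dots> = (\<Sum>w<length r. if m = w then 0 else ?t w)"
    using m by (simp add: sum.If_cases Diff_eq Int_commute)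
  finally show "(\<Sum>p<length r - 1. (-1) ^ m * (-1) ^ p * a (r ! m) * b (remove_nth m r ! p)
        * pfaff A (remove_nth p (remove_nth m r))) = (\<Sum>w<length r. if m = w then 0 else ?t w)" .
qed

lemma pfaff_two_rows_symmetric_eq_0:
  assumes "\<And>m w. c m w = c w m"
  shows "(\<Sum>m<length r. \<Sum>w<length r. if m = w then 0 else
     (-1) ^ m * (-1) ^ delete_index m w * c m w
       * pfaff A (remove_nth (delete_index m w) (remove_nth m r))) = 0"
proof (rule sum_sum_antisymmetric_eq_0)
  fix m w assume "m \<in> {..<length r}" "w \<in> {..<length r}"
  then show "(if w = m then 0 else (-1) ^ w * (-1) ^ delete_index w m * c w m
        * pfaff A (remove_nth (delete_index w m) (remove_nth w r)))
      = - (if m = w then 0 else (-1) ^ m * (-1) ^ delete_index m w * c m w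
        * pfaff A (remove_nth (delete_index m w) (remove_nth m r)))"
    using sign_delete_index[of m w, where 'a = 'a] assms[of m w]
    by (simp add: remove_nth_remove_nth_commute)
qed simp_all

lemma pfaff_two_rows_swap: "pfaff_two_rows A a b r = - pfaff_two_rows A b a r"
proof -
  have "pfaff_two_rows A a b r + pfaff_two_rows A b a r = (\<Sum>m<length r. \<Sum>w<length r.
      if m = w then 0 else (-1) ^ m * (-1) ^ delete_index m w * (a (r ! m) * b (r ! w) + b (r ! m) * a (r ! w))
        * pfaff A (remove_nth (delete_index m w) (remove_nth m r)))"
    unfolding pfaff_two_rows_pairs sum.distrib[symmetric] by (intro sum.cong refl) (simp add: algebra_simps)
  also have "\<dots> = 0"
    by (rule pfaff_two_rows_symmetric_eq_0) (simp add: algebra_simps)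
  finally have "pfaff_two_rows A a b r + pfaff_two_rows A b a r = 0" .
  then show ?thesis by (simp add: eq_neg_iff_add_eq_0)
qed

lemma pfaff_two_rows_same: "pfaff_two_rows A a a r = 0"
  unfolding pfaff_two_rows_pairs by (rule pfaff_two_rows_symmetric_eq_0) (simp add: mult.commute)

lemma alternating_skew: "alternating A \<Longrightarrow> A j i = - A i j"
  unfolding alternating_def by blast

lemma alternating_diag: "alternating A \<Longrightarrow> A i i = 0"
  unfolding alternating_def by blast

lemma pfaff_swap_first_two:
  "alternating A \<Longrightarrow> pfaff A (j # i # r) = - pfaff A (i # j # r)"
  by (simp add: pfaff_Cons_Cons alternating_skew[of A j i] pfaff_two_rows_swap[of A "A j"])

lemma pfaff_Cons_Cons_same: "alternating A \<Longrightarrow> pfaff A (x # x # r) = 0"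
  by (simp add: pfaff_Cons_Cons alternating_diag pfaff_two_rows_same)

lemma pfaff_swap_adjacent:
  assumes "alternating A"
  shows "pfaff A (xs @ j # i # ys) = - pfaff A (xs @ i # j # ys)"
proof (induction "length xs" arbitrary: xs ys rule: less_induct)
  case less
  show ?case
  proof (cases xs)
    case Nil
    then show ?thesis using pfaff_swap_first_two[OF assms, of j i ys] by simp
  next
    case (Cons h xs')
    define l where "l = xs' @ i # j # ys"
    define l' where "l' = xs' @ j # i # ys"
    define t where "t k = (-1) ^ k * A h (l ! k) * pfaff A (remove_nth k l)" for k
    define t' where "t' k = (-1) ^ k * A h (l' ! k) * pfaff A (remove_nth k l')" for k
    let ?q = "length xs'"
    let ?\<tau> = "Transposition.transpose ?q (Suc ?q)"
    have swap_term: "t' k = - t (?\<tau> k)" if "k < length l" for k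
    proof -
      consider "k < ?q" | "k = ?q" | "k = Suc ?q" | "Suc ?q < k" by linarith
      then show ?thesis
      proof cases
        case 1
        then have "pfaff A (remove_nth k l') = - pfaff A (remove_nth k l)"
          using less.hyps[of "remove_nth k xs'"] Cons by (simp add: l_def l'_def remove_nth_append_left)
        with 1 show ?thesis by (simp add: t_def t'_def l_def l'_def nth_append)
      next
        case 2
        then show ?thesis
          using remove_nth_append_right[of xs' 0 "j # i # ys"] remove_nth_append_right[of xs' 1 "i # j # ys"]
          by (simp add: t_def t'_def l_def l'_def nth_append)
      next
        case 3
        then show ?thesis
          using remove_nth_append_right[of xs' 1 "j # i # ys"] remove_nth_append_right[of xs' 0 "i # j # ys"]
          by (simp add: t_def t'_def l_def l'_def nth_append)
      next
        case 4
        define m where "m = k - Suc (Suc ?q)"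
        have m: "k = length (xs' @ [i, j]) + m" using 4 by (simp add: m_def)
        have "pfaff A (remove_nth k l') = - pfaff A (remove_nth k l)"
          using less.hyps[of xs'] Cons remove_nth_append_right[of "xs' @ [j, i]" m ys]
            remove_nth_append_right[of "xs' @ [i, j]" m ys]
          by (simp add: l_def l'_def m)
        with 4 m show ?thesis by (simp add: t_def t'_def l_def l'_def nth_append)
      qed
    qed
    have "?\<tau> permutes {..<length l}"
      by (intro permutes_swap_id) (simp_all add: l_def)
    then have "(\<Sum>k<length l. t (?\<tau> k)) = (\<Sum>k<length l. t k)"
      using sum.permute[of ?\<tau> "{..<length l}" t] by (simp add: comp_def)
    moreover have "(\<Sum>k<length l'. t' k) = - (\<Sum>k<length l. t (?\<tau> k))"
      using swap_term by (simp add: l_def l'_def sum_negf[symmetric])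
    ultimately show ?thesis
      using Cons by (simp add: pfaff_Cons t_def t'_def l_def l'_def)
  qed
qed

lemma pfaff_move_to_front:
  assumes "alternating A"
  shows "pfaff A (p @ xs @ y # ys) = (-1) ^ length xs * pfaff A (p @ y # xs @ ys)"
proof (induction xs arbitrary: ys rule: rev_induct)
  case (snoc h xs)
  have "pfaff A (p @ (xs @ [h]) @ y # ys) = - pfaff A ((p @ xs) @ y # h # ys)"
    using pfaff_swap_adjacent[OF assms, of "p @ xs" y h ys] by simp
  also have "\<dots> = - ((-1) ^ length xs * pfaff A (p @ y # xs @ h # ys))"
    using snoc[of "h # ys"] by simp
  finally show ?case by simp
qed simp

lemma pfaff_Cons_member:
  assumes "alternating A" "x \<in> set l"
  shows "pfaff A (x # l) = 0"
proof -
  obtain us ws where "l = us @ x # ws" using split_list[OF assms(2)] by blast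
  then show ?thesis
    using pfaff_move_to_front[OF assms(1), of "[x]" us x ws] pfaff_Cons_Cons_same[OF assms(1)] by simp
qed

lemma pfaff_swap_blocks:
  assumes "alternating A"
  shows "pfaff A (xs @ ys) = (-1) ^ (length xs * length ys) * pfaff A (ys @ xs)"
proof -
  have "pfaff A (p @ xs @ ys) = (-1) ^ (length xs * length ys) * pfaff A (p @ ys @ xs)" for p
  proof (induction ys arbitrary: p)
    case (Cons y ys)
    have "pfaff A (p @ xs @ y # ys) = (-1) ^ length xs * pfaff A ((p @ [y]) @ xs @ ys)"
      using pfaff_move_to_front[OF assms] by simp
    also have "\<dots> = (-1) ^ length xs * (-1) ^ (length xs * length ys) * pfaff A ((p @ [y]) @ ys @ xs)"
      using Cons[of "p @ [y]"] by simp
    finally show ?case by (simp add: power_add)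
  qed simp
  from this[of "[]"] show ?thesis by simp
qed

definition restrict_mat :: "nat set \<Rightarrow> (nat \<Rightarrow> nat \<Rightarrow> 'a::zero) \<Rightarrow> nat \<Rightarrow> nat \<Rightarrow> 'a" where
  "restrict_mat S A i j = (if i \<in> S \<and> j \<in> S then A i j else 0)"

lemma pfaff_restrict_mat: "set l \<subseteq> S \<Longrightarrow> pfaff (restrict_mat S A) l = pfaff A l"
  by (rule pfaff_cong) (auto simp: restrict_mat_def)

lemma alternating_restrict_mat:
  assumes "\<And>i j. i \<in> S \<Longrightarrow> j \<in> S \<Longrightarrow> A i j = - A j i" "\<And>i. i \<in> S \<Longrightarrow> A i i = 0"
  shows "alternating (restrict_mat S A)"
  unfolding alternating_def restrict_mat_def by (auto simp: assms(2) intro: assms(1))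

text \<open>If \<open>v\<close> is a left kernel vector of \<open>A\<close>, expanding \<open>\<Sum>u. v u * pfaff A (u # R)\<close> along its
  first row gives \<open>0\<close>, and all summands with \<open>u \<in> set R\<close> vanish because \<open>u\<close> is repeated.\<close>
lemma pfaff_left_kernel:
  fixes A :: "nat \<Rightarrow> nat \<Rightarrow> 'a::comm_ring_1"
  assumes alt: "alternating A" and "finite U"
    and ker: "\<And>b. b \<in> U \<Longrightarrow> (\<Sum>u\<in>U. v u * A u b) = 0"
    and "a \<in> U" "c \<in> U" "a \<noteq> c" and R: "set R = U - {a, c}"
  shows "v a * pfaff A (a # R) + v c * pfaff A (c # R) = 0"
proof -
  have "(\<Sum>u\<in>U. v u * pfaff A (u # R))
      = (\<Sum>u\<in>U. \<Sum>k<length R. v u * ((-1) ^ k * A u (R ! k) * pfaff A (remove_nth k R)))"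
    by (simp add: pfaff_Cons sum_distrib_left)
  also have "\<dots> = (\<Sum>k<length R. \<Sum>u\<in>U. v u * ((-1) ^ k * A u (R ! k) * pfaff A (remove_nth k R)))"
    by (rule sum.swap)
  also have "\<dots> = (\<Sum>k<length R. (-1) ^ k * pfaff A (remove_nth k R) * (\<Sum>u\<in>U. v u * A u (R ! k)))"
    by (simp add: sum_distrib_left mult_ac)
  also have "\<dots> = 0"
    using R nth_mem[of _ R] by (intro sum.neutral ballI) (simp add: ker)
  finally have "(\<Sum>u\<in>U. v u * pfaff A (u # R)) = 0" .
  moreover have "(\<Sum>u\<in>U - {a, c}. v u * pfaff A (u # R)) = 0"
    using R by (intro sum.neutral ballI) (simp add: pfaff_Cons_member[OF alt])
  ultimately show ?thesis
    using assms sum.subset_diff[of "{a, c}" U "\<lambda>u. v u * pfaff A (u # R)"] by simp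
qed

lemma upt_split_at: "l \<le> a \<Longrightarrow> a < h \<Longrightarrow> [l..<h] = [l..<a] @ a # [Suc a..<h]"
  using upt_add_eq_append[of l a "h - a"] by (simp add: upt_conv_Cons)

lemma removeAll_upt: "l \<le> a \<Longrightarrow> a < h \<Longrightarrow> removeAll a [l..<h] = [l..<a] @ [Suc a..<h]"
  by (simp add: upt_split_at removeAll_id del: upt_Suc)

lemma minus_one_power_odd_add: "odd (k + l) \<Longrightarrow> (-1) ^ k = - ((-1) ^ l :: 'a::ring_1)"
  by (cases "even k") auto

lemma submaximal_pfaff_left_kernel:
  fixes A :: "nat \<Rightarrow> nat \<Rightarrow> 'a::comm_ring_1"
  assumes alt: "alternating A" and ker: "\<And>b. b \<in> {1..N} \<Longrightarrow> (\<Sum>u\<in>{1..N}. v u * A u b) = 0"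
    and "1 \<le> a" "a < c" "c \<le> N"
  shows "v a * ((-1) ^ (N - c) * pfaff A (removeAll c [1..<N+1]))
       = v c * ((-1) ^ (N - a) * pfaff A (removeAll a [1..<N+1]))"
proof -
  define R where "R = [1..<a] @ [Suc a..<c] @ [Suc c..<N+1]"
  have "removeAll c [1..<N+1] = [] @ [1..<a] @ a # [Suc a..<c] @ [Suc c..<N+1]"
    using assms removeAll_upt[of 1 c "N+1"] upt_split_at[of 1 a c] by (simp del: upt_Suc)
  then have Pf_c: "pfaff A (removeAll c [1..<N+1]) = (-1) ^ (a - 1) * pfaff A (a # R)"
    using pfaff_move_to_front[OF alt, of "[]" "[1..<a]" a] by (simp add: R_def del: upt_Suc)
  have "removeAll a [1..<N+1] = [] @ ([1..<a] @ [Suc a..<c]) @ c # [Suc c..<N+1]"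
    using assms removeAll_upt[of 1 a "N+1"] upt_split_at[of "Suc a" c "N+1"] by (simp del: upt_Suc)
  then have Pf_a: "pfaff A (removeAll a [1..<N+1]) = (-1) ^ (c - 2) * pfaff A (c # R)"
    using pfaff_move_to_front[OF alt, of "[]" "[1..<a] @ [Suc a..<c]" c] assms by (simp add: R_def del: upt_Suc)
  have "set R = {1..N} - {a, c}"
    using assms by (auto simp: R_def)
  with assms have "v a * pfaff A (a # R) + v c * pfaff A (c # R) = 0"
    by (intro pfaff_left_kernel[OF alt _ ker]) auto
  then have "v a * pfaff A (a # R) = - (v c * pfaff A (c # R))"
    by (simp only: eq_neg_iff_add_eq_0)
  moreover have "(-1) ^ (N - c + (a - 1)) = - ((-1) ^ (N - a + (c - 2)) :: 'a)"
  proof (rule minus_one_power_odd_add)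
    have "N - c + (a - 1) + (N - a + (c - 2)) = 2 * (N - 2) + 1" using assms by simp
    then show "odd (N - c + (a - 1) + (N - a + (c - 2)))" by simp
  qed
  ultimately have "(-1) ^ (N - c + (a - 1)) * (v a * pfaff A (a # R))
      = (-1) ^ (N - a + (c - 2)) * (v c * pfaff A (c # R))"
    by simp
  then show ?thesis
    unfolding Pf_a Pf_c power_add by (simp add: mult_ac)
qed

section \<open>Expansion of a Pfaffian along rows with a zero diagonal block\<close>

definition sorted_index :: "nat \<Rightarrow> nat set \<Rightarrow> nat" where
  "sorted_index x X = card {y\<in>X. y < x}"

lemma sorted_index_nth:
  assumes "finite X" "u < card X"
  shows "sorted_index (sorted_list_of_set X ! u) X = u"
proof -
  let ?l = "sorted_list_of_set X"
  have "{y\<in>X. y < ?l ! u} = set (take u ?l)"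
  proof (intro equalityI subsetI)
    fix y assume y: "y \<in> {y\<in>X. y < ?l ! u}"
    then have "y \<in> set ?l" using assms by simp
    then obtain v where "v < card X" "?l ! v = y"
      by (auto simp: in_set_conv_nth)
    moreover have "v < u"
      using y calculation assms sorted_nth_mono[OF sorted_sorted_list_of_set, of u v X] by fastforce
    ultimately show "y \<in> set (take u ?l)"
      by (auto simp: in_set_conv_nth intro!: exI[of _ v])
  next
    fix y assume "y \<in> set (take u ?l)"
    then obtain v where "v < u" "?l ! v = y"
      using assms by (auto simp: in_set_conv_nth)
    with assms show "y \<in> {y\<in>X. y < ?l ! u}"
      using sorted_wrt_nth_less[OF strict_sorted_list_of_set, of v u X] nth_mem[of v ?l] by auto
  qed
  then show ?thesis
    using assms by (simp add: sorted_index_def distinct_card)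
qed

lemma sorted_list_of_set_remove_nth:
  assumes "finite X" "u < card X"
  shows "sorted_list_of_set (X - {sorted_list_of_set X ! u}) = remove_nth u (sorted_list_of_set X)"
proof -
  let ?l = "sorted_list_of_set X"
  have split: "take u ?l @ ?l ! u # drop (Suc u) ?l = ?l"
    using assms by (simp add: id_take_nth_drop[symmetric])
  have "distinct (take u ?l @ ?l ! u # drop (Suc u) ?l)"
    by (simp only: split distinct_sorted_list_of_set)
  then have "?l ! u \<notin> set (take u ?l)" by simp
  moreover have "remove1 (?l ! u) ?l = remove1 (?l ! u) (take u ?l @ ?l ! u # drop (Suc u) ?l)"
    using assms by (simp add: id_take_nth_drop[symmetric])
  ultimately show ?thesis
    using assms by (simp add: sorted_list_of_set_remove remove1_append remove_nth_def)
qed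

lemma sum_sorted_list_of_set_nth:
  assumes "finite X"
  shows "(\<Sum>k<card X. g k (sorted_list_of_set X ! k)) = (\<Sum>x\<in>X. g (sorted_index x X) x)"
proof -
  have "bij_betw ((!) (sorted_list_of_set X)) {..<card X} X"
    using assms by (intro bij_betw_nth) simp_all
  then show ?thesis
    using assms by (simp add: sum.reindex_bij_betw[symmetric] sorted_index_nth)
qed

lemma sorted_index_remove:
  assumes "finite X" "w \<noteq> z" "z \<in> X"
  shows "sorted_index w X = sorted_index w (X - {z}) + (if z < w then 1 else 0)"
proof -
  have "{y\<in>X. y < w} = (if z < w then insert z {y\<in>X - {z}. y < w} else {y\<in>X - {z}. y < w})"
    using assms by auto
  then show ?thesis
    using assms by (simp add: sorted_index_def)
qed

lemma sum_sorted_index_remove: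
  assumes "finite X" "Z \<subseteq> X" "z \<in> Z" "card Z = Suc p"
  shows "p + sorted_index z X + (\<Sum>w\<in>Z - {z}. sorted_index w (X - {z}))
       = (\<Sum>w\<in>Z. sorted_index w X) + sorted_index z Z"
proof -
  have fin: "finite Z" using assms finite_subset by blast
  have "(\<Sum>w\<in>Z - {z}. sorted_index w X)
      = (\<Sum>w\<in>Z - {z}. sorted_index w (X - {z})) + (\<Sum>w\<in>Z - {z}. if z < w then 1 else 0)"
    unfolding sum.distrib[symmetric] using assms
    by (intro sum.cong refl) (use sorted_index_remove[of X _ z] in auto)
  also have "(\<Sum>w\<in>Z - {z}. if z < w then 1 else 0) = card {w\<in>Z - {z}. z < w}"
    using fin by (simp add: sum.inter_filter[symmetric])
  also have "{w\<in>Z - {z}. z < w} = {w\<in>Z. z < w}"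
    by auto
  finally have "(\<Sum>w\<in>Z - {z}. sorted_index w X)
      = (\<Sum>w\<in>Z - {z}. sorted_index w (X - {z})) + card {w\<in>Z. z < w}" .
  moreover have "(\<Sum>w\<in>Z. sorted_index w X) = sorted_index z X + (\<Sum>w\<in>Z - {z}. sorted_index w X)"
    using fin assms(3) by (rule sum.remove)
  moreover have "card Z = card ({w\<in>Z. w < z} \<union> insert z {w\<in>Z. z < w})"
    using assms(3) by (intro arg_cong[where f = card]) auto
  then have "card Z = sorted_index z Z + 1 + card {w\<in>Z. z < w}"
    using fin by (simp add: sorted_index_def) (subst card_Un_disjoint; auto)
  ultimately show ?thesis using assms(4) by linarith
qed

definition minor_det :: "(nat \<Rightarrow> nat \<Rightarrow> 'a::comm_ring_1) \<Rightarrow> nat list \<Rightarrow> nat set \<Rightarrow> 'a" where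
  "minor_det A ys Z = det (mat (length ys) (length ys) (\<lambda>(t, u). A (ys ! t) (sorted_list_of_set Z ! u)))"

lemma minor_det_Nil: "minor_det A [] Z = 1"
  by (simp add: minor_det_def det_def permutes_empty)

lemma minor_det_Cons:
  assumes "finite Z" "card Z = Suc (length ys)"
  shows "minor_det A (y # ys) Z
       = (\<Sum>z\<in>Z. (-1) ^ sorted_index z Z * A y z * minor_det A ys (Z - {z}))"
proof -
  let ?l = "sorted_list_of_set Z"
  let ?m = "Suc (length ys)"
  define M where "M = mat ?m ?m (\<lambda>(t, u). A ((y # ys) ! t) (?l ! u))"
  have "minor_det A (y # ys) Z = det M"
    by (simp add: minor_det_def M_def)
  also have "\<dots> = (\<Sum>u<?m. M $$ (0, u) * cofactor M 0 u)"
    by (rule laplace_expansion_row) (simp_all add: M_def)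
  also have "\<dots> = (\<Sum>u<card Z. (-1) ^ u * A y (?l ! u) * minor_det A ys (Z - {?l ! u}))"
  proof (rule sum.cong)
    fix u assume "u \<in> {..<card Z}"
    then have u: "u < card Z" by simp
    have "mat_delete M 0 u = mat (length ys) (length ys) (\<lambda>(t, u'). A (ys ! t) (remove_nth u ?l ! u'))"
      using assms u by (intro eq_matI) (auto simp: mat_delete_def M_def nth_remove_nth insert_index_def)
    then show "M $$ (0, u) * cofactor M 0 u = (-1) ^ u * A y (?l ! u) * minor_det A ys (Z - {?l ! u})"
      using assms u by (simp add: cofactor_def minor_det_def M_def sorted_list_of_set_remove_nth)
  qed (use assms in simp)
  also have "\<dots> = (\<Sum>z\<in>Z. (-1) ^ sorted_index z Z * A y z * minor_det A ys (Z - {z}))"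
    using assms(1) by (rule sum_sorted_list_of_set_nth)
  finally show ?thesis .
qed

lemma sum_subsets_remove:
  assumes "finite X"
  shows "(\<Sum>x\<in>X. \<Sum>Z\<in>{Z. Z \<subseteq> X - {x} \<and> card Z = p}. g x Z)
       = (\<Sum>Z\<in>{Z. Z \<subseteq> X \<and> card Z = Suc p}. \<Sum>z\<in>Z. g z (Z - {z}))"
proof -
  have fin: "finite {Z. Z \<subseteq> Y \<and> card Z = q}" if "finite Y" for Y :: "'a set" and q
    using that by (auto intro: finite_subset[of _ "Pow Y"])
  have "(\<Sum>x\<in>X. \<Sum>Z\<in>{Z. Z \<subseteq> X - {x} \<and> card Z = p}. g x Z)
      = (\<Sum>(x, Z)\<in>Sigma X (\<lambda>x. {Z. Z \<subseteq> X - {x} \<and> card Z = p}). g x Z)"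
    using assms fin by (intro sum.Sigma) auto
  also have "\<dots> = (\<Sum>(Z, z)\<in>Sigma {Z. Z \<subseteq> X \<and> card Z = Suc p} (\<lambda>Z. Z). g z (Z - {z}))"
  proof (rule sum.reindex_bij_witness[where i = "\<lambda>(Z, z). (z, Z - {z})" and j = "\<lambda>(x, Z). (insert x Z, x)"])
    fix xZ assume "xZ \<in> Sigma X (\<lambda>x. {Z. Z \<subseteq> X - {x} \<and> card Z = p})"
    then obtain x Z where xZ: "xZ = (x, Z)" "x \<in> X" "Z \<subseteq> X - {x}" "card Z = p"
      by auto
    moreover from xZ have "finite Z" "x \<notin> Z"
      using assms finite_subset by auto
    ultimately show "(case (case xZ of (x, Z) \<Rightarrow> (insert x Z, x)) of (Z, z) \<Rightarrow> (z, Z - {z})) = xZ"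
      and "(case xZ of (x, Z) \<Rightarrow> (insert x Z, x)) \<in> Sigma {Z. Z \<subseteq> X \<and> card Z = Suc p} (\<lambda>Z. Z)"
      and "(case (case xZ of (x, Z) \<Rightarrow> (insert x Z, x)) of (Z, z) \<Rightarrow> g z (Z - {z})) = (case xZ of (x, Z) \<Rightarrow> g x Z)"
      by (auto simp: insert_Diff_if)
  qed (auto dest: card_eq_SucD)
  also have "\<dots> = (\<Sum>Z\<in>{Z. Z \<subseteq> X \<and> card Z = Suc p}. \<Sum>z\<in>Z. g z (Z - {z}))"
    using assms fin by (intro sum.Sigma[symmetric]) (auto intro: finite_subset)
  finally show ?thesis .
qed

lemma sum_lessThan_add: "(\<Sum>k<m + (n::nat). f k) = (\<Sum>k<m. f k) + (\<Sum>k<n. f (m + k))"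
  by (induction n) (simp_all add: add.assoc)

lemma pfaff_Cons_append_zero:
  assumes "\<And>y'. y' \<in> set ys \<Longrightarrow> A y y' = 0"
  shows "pfaff A ((y # ys) @ xs)
       = (\<Sum>k<length xs. (-1) ^ (length ys + k) * A y (xs ! k) * pfaff A (ys @ remove_nth k xs))"
proof -
  have "pfaff A ((y # ys) @ xs) = (\<Sum>k<length ys. (-1) ^ k * A y ((ys @ xs) ! k) * pfaff A (remove_nth k (ys @ xs)))
      + (\<Sum>k<length xs. (-1) ^ (length ys + k) * A y ((ys @ xs) ! (length ys + k))
          * pfaff A (remove_nth (length ys + k) (ys @ xs)))"
    by (simp add: pfaff_Cons sum_lessThan_add)
  also have "(\<Sum>k<length ys. (-1) ^ k * A y ((ys @ xs) ! k) * pfaff A (remove_nth k (ys @ xs))) = 0"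
    using assms by (intro sum.neutral) (auto simp: nth_append)
  finally show ?thesis
    by (simp add: remove_nth_append_right)
qed

lemma pfaff_zero_block_expansion:
  fixes A :: "nat \<Rightarrow> nat \<Rightarrow> 'a::comm_ring_1"
  assumes "finite X" "\<And>y y'. y \<in> set ys \<Longrightarrow> y' \<in> set ys \<Longrightarrow> A y y' = 0"
  shows "pfaff A (ys @ sorted_list_of_set X) = (\<Sum>Z\<in>{Z. Z \<subseteq> X \<and> card Z = length ys}.
           (-1) ^ (\<Sum>z\<in>Z. sorted_index z X) * minor_det A ys Z * pfaff A (sorted_list_of_set (X - Z)))"
  using assms
proof (induction ys arbitrary: X)
  case Nil
  then have "{Z. Z \<subseteq> X \<and> card Z = 0} = {{}}"
    by (auto dest: finite_subset)
  then show ?case by (simp add: minor_det_Nil)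
next
  case (Cons y ys)
  let ?p = "length ys"
  let ?sl = sorted_list_of_set
  define g where "g x Z' = (-1) ^ (?p + sorted_index x X + (\<Sum>w\<in>Z'. sorted_index w (X - {x}))) * A y x
      * minor_det A ys Z' * pfaff A (?sl (X - {x} - Z'))" for x Z'
  have "pfaff A ((y # ys) @ ?sl X)
      = (\<Sum>k<card X. (-1) ^ (?p + k) * A y (?sl X ! k) * pfaff A (ys @ ?sl (X - {?sl X ! k})))"
    using Cons.prems pfaff_Cons_append_zero[of ys A y "?sl X"]
    by (simp add: sorted_list_of_set_remove_nth)
  also have "\<dots> = (\<Sum>x\<in>X. (-1) ^ (?p + sorted_index x X) * A y x * pfaff A (ys @ ?sl (X - {x})))"
    using Cons.prems(1) by (rule sum_sorted_list_of_set_nth)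
  also have "\<dots> = (\<Sum>x\<in>X. \<Sum>Z'\<in>{Z. Z \<subseteq> X - {x} \<and> card Z = ?p}. g x Z')"
  proof (intro sum.cong refl)
    fix x assume "x \<in> X"
    have "pfaff A (ys @ ?sl (X - {x})) = (\<Sum>Z'\<in>{Z. Z \<subseteq> X - {x} \<and> card Z = ?p}.
        (-1) ^ (\<Sum>w\<in>Z'. sorted_index w (X - {x})) * minor_det A ys Z' * pfaff A (?sl (X - {x} - Z')))"
      using Cons.prems by (intro Cons.IH) auto
    then show "(-1) ^ (?p + sorted_index x X) * A y x * pfaff A (ys @ ?sl (X - {x}))
        = (\<Sum>Z'\<in>{Z. Z \<subseteq> X - {x} \<and> card Z = ?p}. g x Z')"
      by (simp add: g_def sum_distrib_left power_add mult_ac)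
  qed
  also have "\<dots> = (\<Sum>Z\<in>{Z. Z \<subseteq> X \<and> card Z = Suc ?p}. \<Sum>z\<in>Z. g z (Z - {z}))"
    using Cons.prems(1) by (rule sum_subsets_remove)
  also have "\<dots> = (\<Sum>Z\<in>{Z. Z \<subseteq> X \<and> card Z = Suc ?p}. (-1) ^ (\<Sum>z\<in>Z. sorted_index z X)
      * minor_det A (y # ys) Z * pfaff A (?sl (X - Z)))"
  proof (intro sum.cong refl)
    fix Z assume Z: "Z \<in> {Z. Z \<subseteq> X \<and> card Z = Suc ?p}"
    then have "finite Z" using Cons.prems(1) finite_subset by blast
    have "g z (Z - {z}) = (-1) ^ (\<Sum>w\<in>Z. sorted_index w X)
        * ((-1) ^ sorted_index z Z * A y z * minor_det A ys (Z - {z})) * pfaff A (?sl (X - Z))" if "z \<in> Z" for z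
    proof -
      have "X - {z} - (Z - {z}) = X - Z" using that by auto
      then show ?thesis
        using that Z Cons.prems(1) sum_sorted_index_remove[of X Z z ?p]
        by (simp add: g_def power_add mult_ac)
    qed
    then show "(\<Sum>z\<in>Z. g z (Z - {z})) = (-1) ^ (\<Sum>z\<in>Z. sorted_index z X)
        * minor_det A (y # ys) Z * pfaff A (?sl (X - Z))"
      using Z \<open>finite Z\<close> by (simp add: minor_det_Cons sum_distrib_left sum_distrib_right)
  qed
  finally show ?case by simp
qed

lemma permutes_conjugate:
  assumes "p permutes A" "bij_betw f A B" "\<And>x. x \<in> A \<Longrightarrow> f' (f x) = x" "finite A"
  shows "(\<lambda>x. if x \<in> B then f (p (f' x)) else x) permutes B"
    and "sign (\<lambda>x. if x \<in> B then f (p (f' x)) else x) = sign p"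
proof -
  interpret permutes_bij_finite p A B f f' "\<lambda>x. if x \<in> B then f (p (f' x)) else x"
    by unfold_locales (use assms in auto)
  show "(\<lambda>x. if x \<in> B then f (p (f' x)) else x) permutes B" by (rule permutes_p')
  show "sign (\<lambda>x. if x \<in> B then f (p (f' x)) else x) = sign p" by (rule sign_p')
qed

lemma det_mat_Leibniz:
  "det (mat m m F) = (\<Sum>q | q permutes {0..<m}. of_int (sign q) * (\<Prod>i<m. F (i, q i)))"
  unfolding det_def by (auto simp: atLeast0LessThan permutes_in_image intro!: sum.cong prod.cong)

lemma detm_eq_det: "detm m M = det (mat m m (\<lambda>(i, j). M (Suc i) (Suc j)))"
proof -
  define down where "down p = (\<lambda>x. if x \<in> {0..<m} then p (Suc x) - 1 else x)" for p :: "nat \<Rightarrow> nat"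
  define up where "up q = (\<lambda>x. if x \<in> {1..m} then Suc (q (x - 1)) else x)" for q :: "nat \<Rightarrow> nat"
  have bij_down: "bij_betw (\<lambda>x. x - 1) {1..m} {0..<m}"
    by (rule bij_betw_byWitness[where f' = Suc]) auto
  have bij_up: "bij_betw Suc {0..<m} {1..m}"
    by (rule bij_betw_byWitness[where f' = "\<lambda>x. x - 1"]) auto
  have down: "down p permutes {0..<m}" "sign (down p) = sign p" if "p permutes {1..m}" for p
    using permutes_conjugate[OF that bij_down, of Suc] by (simp_all add: down_def)
  have up: "up q permutes {1..m}" "sign (up q) = sign q" if "q permutes {0..<m}" for q
    using permutes_conjugate[OF that bij_up, of "\<lambda>x. x - 1"] by (simp_all add: up_def)
  have "detm m M = (\<Sum>q | q permutes {0..<m}. of_int (sign q) * (\<Prod>i<m. M (Suc i) (Suc (q i))))"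
    unfolding detm_def
  proof (rule sum.reindex_bij_witness[where i = up and j = down])
    fix p assume "p \<in> {p. p permutes {1..m}}"
    then have p: "p permutes {1..m}" by simp
    then have p_range: "x \<in> {1..m} \<Longrightarrow> p x \<in> {1..m}" for x
      using permutes_in_image[OF p] by blast
    show "up (down p) = p"
    proof
      fix x show "up (down p) x = p x"
        using p_range[of x] permutes_not_in[OF p, of x] by (auto simp: up_def down_def)
    qed
    show "down p \<in> {q. q permutes {0..<m}}" using down[OF p] by simp
    have "(\<Prod>i<m. M (Suc i) (Suc (down p i))) = (\<Prod>i<m. M (Suc i) (p (Suc i)))"
    proof (rule prod.cong)
      fix i assume "i \<in> {..<m}"
      then show "M (Suc i) (Suc (down p i)) = M (Suc i) (p (Suc i))"
        using p_range[of "Suc i"] by (simp add: down_def)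
    qed simp
    also have "\<dots> = (\<Prod>i\<in>{1..m}. M i (p i))"
      by (rule prod.reindex_bij_witness[where i = "\<lambda>x. x - 1" and j = Suc]) auto
    finally show "of_int (sign (down p)) * (\<Prod>i<m. M (Suc i) (Suc (down p i)))
        = of_int (sign p) * (\<Prod>i\<in>{1..m}. M i (p i))"
      using down[OF p] by simp
  next
    fix q assume "q \<in> {q. q permutes {0..<m}}"
    then have q: "q permutes {0..<m}" by simp
    show "down (up q) = q"
      using permutes_in_image[OF q] permutes_not_in[OF q] by (auto simp: up_def down_def fun_eq_iff)
    show "up q \<in> {p. p permutes {1..m}}" using up[OF q] by simp
  qed
  also have "\<dots> = det (mat m m (\<lambda>(i, j). M (Suc i) (Suc j)))"
    by (simp add: det_mat_Leibniz)
  finally show ?thesis .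
qed

section \<open>Content ideals\<close>

interpretation self_module: Modules.module "(*) :: 'a::comm_ring_1 \<Rightarrow> 'a \<Rightarrow> 'a"
  by unfold_locales (simp_all add: algebra_simps)

lemma ideal_gen_eq_span: "ideal_gen G = self_module.span G"
  by (simp add: ideal_gen_def self_module.span_explicit)

lemma module_hom_mult_left: "Modules.module_hom (*) (*) (\<lambda>u. t * (u :: 'a::comm_ring_1))"
  unfolding Modules.module_hom_iff
  by (simp add: self_module.module_axioms distrib_left mult.left_commute)

lemma ideal_gen_mult_image: "ideal_gen ((\<lambda>u. t * u) ` X) = (\<lambda>u. t * u) ` ideal_gen X"
  unfolding ideal_gen_eq_span by (rule Modules.module_hom.span_image[OF module_hom_mult_left])

lemma lookup_single_mult:
  fixes G :: "('a::cancel_comm_monoid_add) \<Rightarrow>\<^sub>0 ('b::comm_semiring_1)"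
  shows "Poly_Mapping.lookup (Poly_Mapping.single m c * G) k
       = c * (\<Sum>q. Poly_Mapping.lookup G q when k = m + q)"
proof -
  have "Poly_Mapping.lookup (Poly_Mapping.single m c * G) k
      = (\<Sum>l. if l = m then c * (\<Sum>q. Poly_Mapping.lookup G q when k = m + q) else 0)"
    unfolding lookup_mult by (rule Sum_any.cong) (auto simp: lookup_single when_def)
  then show ?thesis by simp
qed

lemma lookup_single_mult_add:
  fixes G :: "('a::cancel_comm_monoid_add) \<Rightarrow>\<^sub>0 ('b::comm_semiring_1)"
  shows "Poly_Mapping.lookup (Poly_Mapping.single m c * G) (m + q) = c * Poly_Mapping.lookup G q"
proof -
  have "(\<Sum>q'. Poly_Mapping.lookup G q' when m + q = m + q') = (\<Sum>q'. if q' = q then Poly_Mapping.lookup G q else 0)"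
    by (rule Sum_any.cong) (auto simp: when_def)
  then show ?thesis by (simp add: lookup_single_mult)
qed

lemma lookup_single_mult_not_add:
  fixes G :: "('a::cancel_comm_monoid_add) \<Rightarrow>\<^sub>0 ('b::comm_semiring_1)"
  assumes "\<And>q. k \<noteq> m + q"
  shows "Poly_Mapping.lookup (Poly_Mapping.single m c * G) k = 0"
proof -
  have "(\<Sum>q. Poly_Mapping.lookup G q when k = m + q) = (\<Sum>q::'a. 0)"
    using assms by (intro Sum_any.cong) (simp add: when_def)
  then show ?thesis by (simp add: lookup_single_mult)
qed

lemma lookup_toS_mult: "Poly_Mapping.lookup (toS t * G) k = t * Poly_Mapping.lookup G k"
  using lookup_single_mult_add[of 0 t G k] by (simp add: toS_def)

lemma cT_toS_mult: "cT (toS t * G) = (\<lambda>u. t * u) ` cT G"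
proof -
  have "range (Poly_Mapping.lookup (toS t * G)) = (\<lambda>u. t * u) ` range (Poly_Mapping.lookup G)"
    by (auto simp: lookup_toS_mult)
  then show ?thesis
    unfolding cT_def by (simp add: ideal_gen_mult_image)
qed

lemma cT_uminus: "cT (- G) = cT G"
proof -
  have "range (Poly_Mapping.lookup (- H)) \<subseteq> self_module.span (range (Poly_Mapping.lookup H))" for H :: "'a::comm_ring_1 spoly"
  proof
    fix x assume "x \<in> range (Poly_Mapping.lookup (- H))"
    then obtain k where "x = - Poly_Mapping.lookup H k" by auto
    then show "x \<in> self_module.span (range (Poly_Mapping.lookup H))"
      by (simp add: self_module.span_neg self_module.span_base)
  qed
  from this[of G] this[of "- G"] show ?thesis
    unfolding cT_def ideal_gen_eq_span self_module.span_eq by simp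
qed

lemma cT_monomial_mult: "cT (Poly_Mapping.single m 1 * G) = cT G"
proof -
  let ?L = "range (Poly_Mapping.lookup (Poly_Mapping.single m 1 * G))"
  let ?R = "range (Poly_Mapping.lookup G)"
  have "Poly_Mapping.lookup (Poly_Mapping.single m 1 * G) k \<in> insert 0 ?R" for k
  proof (cases "\<exists>q. k = m + q")
    case True
    then obtain q where "k = m + q" by blast
    then show ?thesis by (simp add: lookup_single_mult_add)
  qed (simp add: lookup_single_mult_not_add)
  then have "?L \<subseteq> insert 0 ?R" by blast
  also have "\<dots> \<subseteq> self_module.span ?R"
    by (intro insert_subsetI self_module.span_zero self_module.span_superset)
  finally have "?L \<subseteq> self_module.span ?R" .
  moreover have "Poly_Mapping.lookup G q \<in> ?L" for q
    by (rule range_eqI[of _ _ "m + q"]) (simp add: lookup_single_mult_add)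
  then have "?R \<subseteq> ?L" by blast
  then have "?R \<subseteq> self_module.span ?L"
    using self_module.span_superset by (rule subset_trans)
  ultimately show ?thesis
    unfolding cT_def ideal_gen_eq_span self_module.span_eq by (intro conjI)
qed

lemma cT_subset_ideal_gen:
  assumes "F \<in> ideal_gen (toS ` M)"
  shows "cT F \<subseteq> ideal_gen M"
proof -
  obtain A r where F: "F = (\<Sum>g\<in>A. r g * g)" "A \<subseteq> toS ` M"
    using assms unfolding ideal_gen_def by blast
  have "Poly_Mapping.lookup (r g * g) k \<in> self_module.span M" if "g \<in> A" for g k
  proof -
    from that F(2) obtain t where "t \<in> M" "g = toS t" by blast
    then show ?thesis
      using self_module.span_scale[OF self_module.span_base, of t M "Poly_Mapping.lookup (r g) k"]
      by (simp add: mult.commute[of _ "toS t"] lookup_toS_mult mult.commute[of t])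
  qed
  then have "range (Poly_Mapping.lookup F) \<subseteq> self_module.span M"
    by (auto simp: F(1) lookup_sum intro: self_module.span_sum)
  then show ?thesis
    unfolding cT_def ideal_gen_eq_span by (rule self_module.span_minimal) simp
qed

interpretation toS_hom: comm_ring_hom "toS :: 'k::comm_ring_1 tpoly \<Rightarrow> 'k spoly"
  by unfold_locales (simp_all add: toS_def single_add mult_single flip: single_one)

lemma single_one_eq_iff: "Poly_Mapping.single j (1::nat) = Poly_Mapping.single j' 1 \<longleftrightarrow> j = j'"
  by (metis lookup_single_eq lookup_single_not_eq zero_neq_one)

lemma sum_Xv_toS_eq_0D:
  assumes "(\<Sum>j\<in>J. Xv j * toS (g j)) = 0" "finite J" "j0 \<in> J"
  shows "g j0 = 0"
proof -
  have "Xv j * toS (g j) = Poly_Mapping.single (Poly_Mapping.single j 1) (g j)" for j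
    by (simp add: Xv_def toS_def mult_single)
  then have "Poly_Mapping.lookup (\<Sum>j\<in>J. Xv j * toS (g j)) (Poly_Mapping.single j0 1) = g j0"
    using assms(2,3) by (simp add: lookup_sum lookup_single when_def single_one_eq_iff[unfolded One_nat_def])
  with assms(1) show ?thesis by simp
qed

section \<open>The matrix \<open>\<BB>\<close>\<close>

locale jacobian_dual =
  fixes n d :: nat
    and phi :: "nat \<Rightarrow> nat \<Rightarrow> 'k::comm_ring_1 spoly"
    and B :: "nat \<Rightarrow> nat \<Rightarrow> 'k tpoly"
  assumes phi_skew: "a \<in> {1..n} \<Longrightarrow> b \<in> {1..n} \<Longrightarrow> phi a b = - phi b a"
    and phi_diag: "a \<in> {1..n} \<Longrightarrow> phi a a = 0"
    and jacobian_dual: "a \<in> {1..n} \<Longrightarrow>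
      (\<Sum>i\<in>{1..n}. toS (Tv i) * phi i a) = (\<Sum>j\<in>{1..d}. Xv j * toS (B j a))"
begin

text \<open>\<open>Bfrak\<close> is alternating only on the indices \<open>1..n + d\<close> (e.g. \<open>phi 0 0\<close> is unconstrained),
  so its entries outside that range are cut off.\<close>
abbreviation Bfrak' :: "nat \<Rightarrow> nat \<Rightarrow> 'k spoly" where
  "Bfrak' \<equiv> restrict_mat {1..n + d} (Bfrak n phi B)"

lemma alternating_Bfrak': "alternating Bfrak'"
  by (rule alternating_restrict_mat) (auto simp: Bfrak_def phi_diag intro: phi_skew)

lemma Fpf_eq_pfaff_Bfrak':
  "b \<in> {1..n + d} \<Longrightarrow> Fpf n d phi B b = (-1) ^ (n + d - b) * pfaff Bfrak' (removeAll b [1..<n + d + 1])"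
proof -
  have "set (removeAll b [1..<n + d + 1]) \<subseteq> {1..n + d}" by auto
  then show ?thesis by (simp add: Fpf_def pfaff_restrict_mat)
qed

lemma B_mult_T_eq_0:
  assumes "j \<in> {1..d}"
  shows "(\<Sum>u\<in>{1..n}. Tv u * B j u) = 0"
proof (rule sum_Xv_toS_eq_0D[of "\<lambda>j. \<Sum>u\<in>{1..n}. Tv u * B j u", OF _ _ assms])
  have "(\<Sum>j\<in>{1..d}. Xv j * toS (\<Sum>u\<in>{1..n}. Tv u * B j u))
      = (\<Sum>j\<in>{1..d}. \<Sum>u\<in>{1..n}. Xv j * (toS (Tv u) * toS (B j u)))"
    by (simp add: toS_hom.hom_sum toS_hom.hom_mult sum_distrib_left)
  also have "\<dots> = (\<Sum>u\<in>{1..n}. toS (Tv u) * (\<Sum>j\<in>{1..d}. Xv j * toS (B j u)))"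
    by (subst sum.swap) (simp only: sum_distrib_left mult.left_commute[of "Xv _"])
  also have "\<dots> = (\<Sum>u\<in>{1..n}. toS (Tv u) * (\<Sum>i\<in>{1..n}. toS (Tv i) * phi i u))"
  proof (rule sum.cong[OF refl])
    fix u assume "u \<in> {1..n}"
    then show "toS (Tv u) * (\<Sum>j\<in>{1..d}. Xv j * toS (B j u)) = toS (Tv u) * (\<Sum>i\<in>{1..n}. toS (Tv i) * phi i u)"
      by (simp only: jacobian_dual)
  qed
  also have "\<dots> = (\<Sum>u\<in>{1..n}. \<Sum>i\<in>{1..n}. toS (Tv u) * toS (Tv i) * phi i u)"
    by (simp only: sum_distrib_left mult.assoc)
  also have "\<dots> = 0"
  proof (rule sum_sum_antisymmetric_eq_0)
    fix u i assume "u \<in> {1..n}" "i \<in> {1..n}"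
    then show "toS (Tv i) * toS (Tv u) * phi u i = - (toS (Tv u) * toS (Tv i) * phi i u)"
      using phi_skew[of u i] by (simp only: mult.commute[of "toS (Tv i)" "toS (Tv u)"] mult_minus_right)
  qed (simp_all add: phi_diag)
  finally show "(\<Sum>j\<in>{1..d}. Xv j * toS (\<Sum>u\<in>{1..n}. Tv u * B j u)) = 0" .
qed simp

definition syzygy :: "nat \<Rightarrow> 'k spoly" where
  "syzygy u = (if u \<le> n then toS (Tv u) else - Xv (u - n))"

lemma syzygy_left_kernel:
  assumes "b \<in> {1..n + d}"
  shows "(\<Sum>u\<in>{1..n + d}. syzygy u * Bfrak' u b) = 0"
proof -
  have split: "(\<Sum>u\<in>{1..n + d}. f u) = (\<Sum>u\<in>{1..n}. f u) + (\<Sum>j\<in>{1..d}. f (n + j))" for f :: "nat \<Rightarrow> 'k spoly"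
    by (induction d) (simp_all add: sum.cl_ivl_Suc add_ac)
  show ?thesis
  proof (cases "b \<le> n")
    case True
    with assms have "b \<in> {1..n}" by simp
    with assms True show ?thesis
      unfolding split using jacobian_dual[of b]
      by (simp add: syzygy_def restrict_mat_def Bfrak_def sum_negf)
  next
    case False
    define j where "j = b - n"
    with assms False have j: "b = n + j" "j \<in> {1..d}" by auto
    then have "(\<Sum>u\<in>{1..n}. syzygy u * Bfrak' u b) = - toS (\<Sum>u\<in>{1..n}. Tv u * B j u)"
      by (simp add: syzygy_def restrict_mat_def Bfrak_def toS_hom.hom_sum toS_hom.hom_mult sum_negf)
    with j B_mult_T_eq_0[OF j(2)] show ?thesis
      unfolding split by (simp add: restrict_mat_def Bfrak_def)
  qed
qed

lemma syzygy_mult_Fpf: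
  assumes "1 \<le> a" "a < c" "c \<le> n + d"
  shows "syzygy a * Fpf n d phi B c = syzygy c * Fpf n d phi B a"
  using submaximal_pfaff_left_kernel[OF alternating_Bfrak' syzygy_left_kernel assms] assms
  by (simp add: Fpf_eq_pfaff_Bfrak')

lemma cT_Fpf_n_plus_eq_last:
  assumes "j \<in> {1..d}"
  shows "cT (Fpf n d phi B (n + j)) = cT (Fpf n d phi B (n + d))"
proof (cases "j = d")
  case False
  with assms have "syzygy (n + j) * Fpf n d phi B (n + d) = syzygy (n + d) * Fpf n d phi B (n + j)"
    by (intro syzygy_mult_Fpf) auto
  with assms have "Xv j * Fpf n d phi B (n + d) = Xv d * Fpf n d phi B (n + j)"
    by (simp add: syzygy_def)
  then show ?thesis
    by (metis Xv_def cT_monomial_mult)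
qed simp

lemma cT_Fpf_eq_Tv_image:
  assumes "i \<in> {1..n}" "j \<in> {1..d}"
  shows "cT (Fpf n d phi B i) = (\<lambda>u. Tv i * u) ` cT (Fpf n d phi B (n + j))"
proof -
  from assms have "syzygy i * Fpf n d phi B (n + j) = syzygy (n + j) * Fpf n d phi B i"
    by (intro syzygy_mult_Fpf) auto
  with assms have "Xv j * Fpf n d phi B i = - (toS (Tv i) * Fpf n d phi B (n + j))"
    by (simp add: syzygy_def)
  then have "cT (Fpf n d phi B i) = cT (toS (Tv i) * Fpf n d phi B (n + j))"
    by (metis Xv_def cT_monomial_mult cT_uminus)
  then show ?thesis
    by (simp add: cT_toS_mult)
qed

definition maximal_minors :: "'k tpoly set" where
  "maximal_minors = {detm d (\<lambda>i j. B i (cols j)) | cols.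
     strict_mono_on {1..d} cols \<and> cols ` {1..d} \<subseteq> {1..n}}"

lemma minor_det_Bfrak'_in_maximal_minors:
  assumes "Z \<subseteq> {1..n}" "card Z = d"
  shows "minor_det Bfrak' [n + 1..<n + d + 1] Z \<in> toS ` maximal_minors"
proof -
  let ?l = "sorted_list_of_set Z"
  define cols where "cols j = ?l ! (j - 1)" for j
  have "finite Z" using assms(1) finite_subset by blast
  then have l: "length ?l = d" "set ?l = Z" using assms(2) by simp_all
  then have l_range: "?l ! u \<in> {1..n}" if "u < d" for u
    using that assms(1) nth_mem[of u ?l] by auto
  have "mat d d (\<lambda>(t, u). Bfrak' ([n + 1..<n + d + 1] ! t) (?l ! u))
      = map_mat toS (mat d d (\<lambda>(t, u). B (Suc t) (?l ! u)))"
  proof (rule eq_matI)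
    fix t u assume "t < dim_row (map_mat toS (mat d d (\<lambda>(t, u). B (Suc t) (?l ! u))))"
      and "u < dim_col (map_mat toS (mat d d (\<lambda>(t, u). B (Suc t) (?l ! u))))"
    with l_range[of u] show "mat d d (\<lambda>(t, u). Bfrak' ([n + 1..<n + d + 1] ! t) (?l ! u)) $$ (t, u)
        = map_mat toS (mat d d (\<lambda>(t, u). B (Suc t) (?l ! u))) $$ (t, u)"
      by (simp add: restrict_mat_def Bfrak_def nth_upt del: upt_Suc)
  qed simp_all
  then have "minor_det Bfrak' [n + 1..<n + d + 1] Z = toS (detm d (\<lambda>i j. B i (cols j)))"
    by (simp add: minor_det_def detm_eq_det cols_def del: upt_Suc)
  moreover have "strict_mono_on {1..d} cols"
    using l by (auto intro!: strict_mono_onI sorted_wrt_nth_less[OF strict_sorted_list_of_set] simp: cols_def)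
  moreover have "cols ` {1..d} \<subseteq> {1..n}"
    using l_range by (auto simp: cols_def)
  ultimately show ?thesis
    unfolding maximal_minors_def by blast
qed

lemma pfaff_Bfrak'_in_ideal_maximal_minors:
  assumes "i \<in> {1..n}"
  shows "pfaff Bfrak' (removeAll i [1..<n + d + 1]) \<in> ideal_gen (toS ` maximal_minors)"
proof -
  define X where "X = {1..n} - {i}"
  define ys where "ys = [n + 1..<n + d + 1]"
  have "sorted_list_of_set X = removeAll i [1..<n + 1]"
    using sorted_list_of_set_range[of 1 "n + 1"]
    by (simp add: X_def sorted_list_of_set_remove atLeastLessThanSuc_atLeastAtMost
        distinct_remove1_removeAll del: upt_Suc)
  moreover have "removeAll i ys = ys"
    using assms by (auto simp: ys_def intro: removeAll_id)
  ultimately have "removeAll i [1..<n + d + 1] = sorted_list_of_set X @ ys"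
    using upt_add_eq_append[of 1 "n + 1" d] by (simp add: ys_def add_ac del: upt_Suc)
  then have "pfaff Bfrak' (removeAll i [1..<n + d + 1]) = pfaff Bfrak' (sorted_list_of_set X @ ys)"
    by (simp only:)
  also have "\<dots> = (-1) ^ (length (sorted_list_of_set X) * length ys) * pfaff Bfrak' (ys @ sorted_list_of_set X)"
    by (rule pfaff_swap_blocks[OF alternating_Bfrak'])
  also have "pfaff Bfrak' (ys @ sorted_list_of_set X) = (\<Sum>Z\<in>{Z. Z \<subseteq> X \<and> card Z = length ys}.
      (-1) ^ (\<Sum>z\<in>Z. sorted_index z X) * minor_det Bfrak' ys Z * pfaff Bfrak' (sorted_list_of_set (X - Z)))"
    by (subst pfaff_zero_block_expansion) (auto simp: X_def ys_def restrict_mat_def Bfrak_def)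
  also have "(-1) ^ (length (sorted_list_of_set X) * length ys) * \<dots> \<in> ideal_gen (toS ` maximal_minors)"
    unfolding ideal_gen_eq_span
  proof (rule self_module.span_scale, rule self_module.span_sum)
    fix Z assume "Z \<in> {Z. Z \<subseteq> X \<and> card Z = length ys}"
    then have "minor_det Bfrak' ys Z \<in> toS ` maximal_minors"
      unfolding ys_def by (intro minor_det_Bfrak'_in_maximal_minors) (auto simp: X_def)
    then have "((-1) ^ (\<Sum>z\<in>Z. sorted_index z X) * pfaff Bfrak' (sorted_list_of_set (X - Z)))
        * minor_det Bfrak' ys Z \<in> self_module.span (toS ` maximal_minors)"
      by (intro self_module.span_scale self_module.span_base)
    then show "(-1) ^ (\<Sum>z\<in>Z. sorted_index z X) * minor_det Bfrak' ys Z * pfaff Bfrak' (sorted_list_of_set (X - Z))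
        \<in> self_module.span (toS ` maximal_minors)"
      by (simp only: mult.commute mult.left_commute)
  qed
  finally show ?thesis .
qed

lemma cT_Fpf_subset_minors_ideal:
  assumes "i \<in> {1..n}"
  shows "cT (Fpf n d phi B i) \<subseteq> minors_ideal d n B"
proof -
  have "Fpf n d phi B i \<in> ideal_gen (toS ` maximal_minors)"
    using assms pfaff_Bfrak'_in_ideal_maximal_minors[OF assms]
    by (simp add: Fpf_eq_pfaff_Bfrak' ideal_gen_eq_span self_module.span_scale)
  then show ?thesis
    unfolding minors_ideal_def maximal_minors_def[symmetric] by (rule cT_subset_ideal_gen)
qed

lemma one_in_minors_ideal_0: "1 \<in> minors_ideal 0 n B"
proof -
  have "detm 0 (\<lambda>i j. B i (id j)) = 1"
    by (simp add: detm_def permutes_empty)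
  then show ?thesis
    unfolding minors_ideal_def ideal_gen_eq_span
    by (intro self_module.span_base) (auto intro!: exI[of _ id] simp: strict_mono_on_def)
qed

lemma cT_Fpf_last_subset_colonT: "cT (Fpf n d phi B (n + d)) \<subseteq> colonT (minors_ideal d n B) n"
proof (intro subsetI CollectI ballI, unfold colonT_def mem_Collect_eq, intro ballI)
  fix u i assume u: "u \<in> cT (Fpf n d phi B (n + d))" and i: "i \<in> {1..n}"
  show "u * Tv i \<in> minors_ideal d n B"
  proof (cases "d = 0")
    case True
    then show ?thesis
      using self_module.span_scale[OF one_in_minors_ideal_0[unfolded ideal_gen_eq_span minors_ideal_def]]
      by (simp add: minors_ideal_def ideal_gen_eq_span)
  next
    case False
    then have "1 \<in> {1..d}" by simp
    with i u have "Tv i * u \<in> cT (Fpf n d phi B i)"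
      using cT_Fpf_eq_Tv_image[of i 1] cT_Fpf_n_plus_eq_last[of 1] by simp
    then show ?thesis
      using cT_Fpf_subset_minors_ideal[OF i] by (auto simp: mult.commute)
  qed
qed

end

lemma linR_uminus: "linR d (\<lambda>j. - c j) = - linR d c"
  by (simp add: linR_def constT_def single_uminus toS_hom.hom_uminus sum_negf)

lemma linR_0: "linR d (\<lambda>j. 0) = 0"
  by (simp add: linR_def constT_def)

lemma jacobian_dual_linR:
  fixes c :: "nat \<Rightarrow> nat \<Rightarrow> nat \<Rightarrow> 'k::comm_ring_1"
  assumes "\<And>a j. a \<in> {1..n} \<Longrightarrow> c a a j = 0"
    and "\<And>a b j. a \<in> {1..n} \<Longrightarrow> b \<in> {1..n} \<Longrightarrow> c a b j = - c b a j"
    and "\<And>a. a \<in> {1..n} \<Longrightarrow>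
      (\<Sum>i\<in>{1..n}. toS (Tv i) * linR d (c i a)) = (\<Sum>j\<in>{1..d}. Xv j * toS (B j a))"
  shows "jacobian_dual n d (\<lambda>a b. linR d (c a b)) B"
proof
  fix a b assume "a \<in> {1..n}" "b \<in> {1..n}"
  then have "c a b = (\<lambda>j. - c b a j)" using assms(2) by blast
  then show "linR d (c a b) = - linR d (c b a)" by (simp add: linR_uminus)
next
  fix a assume "a \<in> {1..n}"
  then have "c a a = (\<lambda>j. 0)" using assms(1) by blast
  then show "linR d (c a a) = 0" by (simp add: linR_0)
qed (rule assms(3))

theorem proposition8p4:
  fixes n d :: nat
    and c :: "nat \<Rightarrow> nat \<Rightarrow> nat \<Rightarrow> 'k::field"
    and bc :: "nat \<Rightarrow> nat \<Rightarrow> nat \<Rightarrow> 'k"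
    and phi :: "nat \<Rightarrow> nat \<Rightarrow> 'k spoly"
    and B :: "nat \<Rightarrow> nat \<Rightarrow> 'k tpoly"
    and F :: "nat \<Rightarrow> 'k spoly"
    and C :: "'k tpoly set"
  defines "phi \<equiv> (\<lambda>a b. linR d (c a b))"
    and "B \<equiv> (\<lambda>j a. linT n (bc j a))"
    and "F \<equiv> Fpf n d phi B"
    and "C \<equiv> cT (F (n + d))"
  assumes alt_diag: "\<And>a j. a \<in> {1..n} \<Longrightarrow> c a a j = 0"
    and alt_skew: "\<And>a b j. a \<in> {1..n} \<Longrightarrow> b \<in> {1..n} \<Longrightarrow> c a b j = - c b a j"
    and rel: "\<And>a. a \<in> {1..n} \<Longrightarrow>
              (\<Sum>i\<in>{1..n}. toS (Tv i) * phi i a) = (\<Sum>j\<in>{1..d}. Xv j * toS (B j a))"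
  shows "(\<forall>i\<in>{1..n}. \<forall>j\<in>{1..d}.
            cT (F i) = (\<lambda>u. Tv i * u) ` cT (F (n + j)) \<and> cT (F i) = (\<lambda>u. Tv i * u) ` C)
       \<and> (\<forall>j\<in>{1..d}. cT (F (n + j)) = C)
       \<and> C \<subseteq> colonT (minors_ideal d n B) n"
proof -
  interpret jacobian_dual n d phi B
    unfolding assms(1) by (rule jacobian_dual_linR[OF alt_diag alt_skew rel[unfolded assms(1)]])
  have T: "cT (F i) = (\<lambda>u. Tv i * u) ` cT (F (n + j))" if "i \<in> {1..n}" "j \<in> {1..d}" for i j
    using cT_Fpf_eq_Tv_image[OF that] unfolding assms(3) .
  have last: "cT (F (n + j)) = C" if "j \<in> {1..d}" for j
    using cT_Fpf_n_plus_eq_last[OF that] unfolding assms(3,4) .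
  show ?thesis
  proof (intro conjI ballI)
    fix i j assume "i \<in> {1..n}" "j \<in> {1..d}"
    then show "cT (F i) = (\<lambda>u. Tv i * u) ` cT (F (n + j))" and "cT (F i) = (\<lambda>u. Tv i * u) ` C"
      using T last by simp_all
  next
    show "C \<subseteq> colonT (minors_ideal d n B) n"
      using cT_Fpf_last_subset_colonT unfolding assms(3,4) .
  qed (rule last)
qed

end
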